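(* Let $p$ be a binary word with exactly one run. If $p=0$ or $p=1$, then $p$ has no internal zero at any $n\ge0$. If $p$ has length $l\ge2$, then $p$ has an internal zero at every $n\ge l+1$.
   Context: $c_p(w)$ is the number of occurrences of $p$ as a (not necessarily consecutive) subsequence of $w$; $B_{n,p}(k)$ is the number of binary words of length $n$ with $c_p(w)=k$. $p$ has an internal zero at $n$ if there exist $0\le k_1<k_2<k_3$ with $B_{n,p}(k_1)\ne0$, $B_{n,p}(k_2)=0$, $B_{n,p}(k_3)\ne0$. *)

theory Defs
  imports Main
begin

text \<open>Binary words are lists of booleans (False = 0, True = 1).\<close>

definition occ :: "bool list \<Rightarrow> bool list \<Rightarrow> nat" where
  "occ p w = card {I. I \<subseteq> {0..<length w} \<and> card I = length p \<and> nths w I = p}"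

definition B :: "nat \<Rightarrow> bool list \<Rightarrow> nat \<Rightarrow> nat" where
  "B n p k = card {w :: bool list. length w = n \<and> occ p w = k}"

definition internal_zero :: "bool list \<Rightarrow> nat \<Rightarrow> bool" where
  "internal_zero p n \<longleftrightarrow>
     (\<exists>k1 k2 k3. k1 < k2 \<and> k2 < k3 \<and> B n p k1 \<noteq> 0 \<and> B n p k2 = 0 \<and> B n p k3 \<noteq> 0)"

definition one_run :: "bool list \<Rightarrow> bool" where
  "one_run p \<longleftrightarrow> p \<noteq> [] \<and> (\<forall>i < length p. p ! i = p ! 0)"

end

theory Submission
  imports Defs
begin

text \<open>An occurrence of \<open>c\<^sup>l\<close> in \<open>w\<close> is just an \<open>l\<close>-subset of the positions of \<open>w\<close> carrying \<open>c\<close>,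
  so \<open>c_p(w) = binom(m, l)\<close> where \<open>m\<close> is the number of letters \<open>c\<close> in \<open>w\<close>, and every
  \<open>m \<le> n\<close> is realised by a word of length \<open>n\<close>. Hence the support of \<open>B_{n,p}\<close> is
  \<open>{binom(m, l) | m \<le> n}\<close>: for \<open>l = 1\<close> this is the interval \<open>{0..n}\<close>, while for \<open>l \<ge> 2\<close>
  and \<open>n \<ge> l + 1\<close> it contains \<open>0\<close> and \<open>l + 1\<close> but never \<open>2\<close>.\<close>

lemma count_list_conv_card: "count_list w c = card {i. i < length w \<and> w ! i = c}"
  by (simp add: count_list_eq_length_filter length_filter_conv_card eq_commute)

lemma nths_eq_replicate_iff:
  assumes "I \<subseteq> {0..<length w}"
  shows "nths w I = replicate (card I) c \<longleftrightarrow> (\<forall>i\<in>I. w ! i = c)"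
proof -
  have "{i. i < length w \<and> i \<in> I} = I" using assms by auto
  then have len: "length (nths w I) = card I" by (simp add: length_nths)
  have "nths w I = replicate (card I) c \<longleftrightarrow> (\<forall>x\<in>set (nths w I). x = c)"
    by (metis len in_set_replicate replicate_length_same)
  also have "\<dots> \<longleftrightarrow> (\<forall>i\<in>I. w ! i = c)"
    using assms by (fastforce simp: set_nths)
  finally show ?thesis .
qed

lemma occ_replicate: "occ (replicate l c) w = count_list w c choose l"
proof -
  let ?P = "{i. i < length w \<and> w ! i = c}"
  have "I \<subseteq> {0..<length w} \<and> card I = l \<and> nths w I = replicate l c
      \<longleftrightarrow> I \<subseteq> ?P \<and> card I = l" for I
  proof (cases "I \<subseteq> {0..<length w} \<and> card I = l")
    case True
    then show ?thesis using nths_eq_replicate_iff[of I w c] by auto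
  qed auto
  then show ?thesis
    unfolding occ_def count_list_conv_card by (simp add: n_subsets)
qed

lemma B_neq_0_iff: "B n p k \<noteq> 0 \<longleftrightarrow> (\<exists>w. length w = n \<and> occ p w = k)"
proof -
  have "finite {w :: bool list. length w = n \<and> occ p w = k}"
    by (rule finite_subset[OF _ finite_lists_length_eq[of UNIV n]]) auto
  then show ?thesis unfolding B_def by auto
qed

lemma B_replicate_eq_0_iff: "B n (replicate l c) k = 0 \<longleftrightarrow> (\<forall>m\<le>n. k \<noteq> m choose l)"
proof -
  have "(\<exists>w. length w = n \<and> occ (replicate l c) w = k) \<longleftrightarrow> (\<exists>m\<le>n. k = m choose l)"
  proof
    assume "\<exists>w. length w = n \<and> occ (replicate l c) w = k"
    then show "\<exists>m\<le>n. k = m choose l" using count_le_length occ_replicate by metis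
  next
    assume "\<exists>m\<le>n. k = m choose l"
    then obtain m where "m \<le> n" "k = m choose l" by blast
    moreover have "count_list (replicate m c @ replicate (n - m) (\<not> c)) c = m"
      by (simp add: count_list_eq_length_filter)
    ultimately show "\<exists>w. length w = n \<and> occ (replicate l c) w = k"
      unfolding occ_replicate by (metis length_append length_replicate le_add_diff_inverse)
  qed
  then show ?thesis using B_neq_0_iff[of n "replicate l c" k] by auto
qed

lemma binomial_neq_2:
  assumes "2 \<le> l"
  shows "m choose l \<noteq> 2"
proof (cases "l < m")
  case True
  then have "Suc l choose l \<le> m choose l" by (intro binomial_right_mono) simp
  with assms show ?thesis by simp
next
  case False
  then have "m choose l \<le> 1" by (cases "m = l") (auto simp: not_less binomial_eq_0)
  then show ?thesis by simp
qed

lemma one_run_imp_replicate: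
  assumes "one_run p"
  shows "replicate (length p) (p ! 0) = p"
proof (rule nth_equalityI)
  fix i assume "i < length (replicate (length p) (p ! 0))"
  then show "replicate (length p) (p ! 0) ! i = p ! i"
    using assms unfolding one_run_def by (metis length_replicate nth_replicate)
qed simp

theorem mainTheorem13:
  fixes p :: "bool list"
  assumes "one_run p"
  shows "(length p = 1 \<longrightarrow> (\<forall>n. \<not> internal_zero p n))
       \<and> (length p \<ge> 2 \<longrightarrow> (\<forall>n. n \<ge> length p + 1 \<longrightarrow> internal_zero p n))"
proof -
  define l where "l = length p"
  have p_replicate: "replicate l (p ! 0) = p"
    using one_run_imp_replicate[OF assms] unfolding l_def .
  have support: "B n p k = 0 \<longleftrightarrow> (\<forall>m\<le>n. k \<noteq> m choose l)" for n k
    using B_replicate_eq_0_iff[of n l "p ! 0" k] unfolding p_replicate .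
  have "\<not> internal_zero p n" if "l = 1" for n
  proof -
    have "B n p k = 0 \<longleftrightarrow> n < k" for k
      unfolding support that choose_one by (metis not_less)
    then show ?thesis unfolding internal_zero_def by auto
  qed
  moreover have "internal_zero p n" if "2 \<le> l" "l + 1 \<le> n" for n
  proof -
    have "0 = 0 choose l" using that(1) by simp
    then have "B n p 0 \<noteq> 0" unfolding support by (metis le0)
    moreover have "B n p 2 = 0"
      unfolding support using binomial_neq_2[OF that(1)] by metis
    moreover have "B n p (l + 1) \<noteq> 0"
      using that(2) binomial_Suc_n[of l] unfolding support by (metis Suc_eq_plus1)
    moreover have "2 < l + 1" using that(1) by simp
    ultimately show ?thesis unfolding internal_zero_def
      by (intro exI[of _ 0] exI[of _ 2] exI[of _ "l + 1"]) simp
  qed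
  ultimately show ?thesis unfolding l_def by auto
qed

end
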